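(* Let $\mathcal D\subseteq(0,1)$ be nonempty and $f:\mathcal D\to(0,1)$. If a finite automaton with $n$ states simulates $f$, then there exist polynomials $g,h\in\mathbb Z[x]$ of degree at most $n$, with $h(x)\neq0$ for all $x\in(0,1)$, such that $F=g/h$ satisfies $0<F(x)<1$ for all $x\in(0,1)$ and $F(p)=f(p)$ for all $p\in\mathcal D$.
   Context: For $w\in\{0,1\}^*$ let $n_i(w)$ be the number of $i$'s in $w$; $\mathbf P_p[w]=p^{n_1(w)}(1-p)^{n_0(w)}$, $\mathbf P_p[L]=\sum_{w\in L}\mathbf P_p[w]$. A simulation of $f:\mathcal D\to[0,1]$ is a pair of disjoint languages $L_0,L_1\subseteq\{0,1\}^*$ with $L_0\cup L_1$ prefix-free such that $\mathbf P_p[L_0\cup L_1]=1$ and $\mathbf P_p[L_1]=f(p)$ for all $p\in\mathcal D$. A finite automaton consists of finite state set $S$, start state $s_0$, transition function $\delta:S\times\{0,1\}\to S$ (extended to strings), and disjoint absorbing final-state sets $S_0,S_1$; $L_i$ is the set of strings $w$ with $\delta(s_0,w)\in S_i$ and $\delta(s_0,w')\notin S_0\cup S_1$ for every proper prefix $w'$ of $w$; the automaton simulates $f$ if $(L_0,L_1)$ is a simulation of $f$. *)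

theory Defs
  imports "HOL-Analysis.Analysis" "HOL-Computational_Algebra.Polynomial"
begin

(* Binary words: True encodes the letter 1, False the letter 0. *)

definition n1 :: "bool list \<Rightarrow> nat" where
  "n1 w = length (filter (\<lambda>b. b) w)"

definition n0 :: "bool list \<Rightarrow> nat" where
  "n0 w = length (filter (\<lambda>b. \<not> b) w)"

definition Pw :: "real \<Rightarrow> bool list \<Rightarrow> real" where
  "Pw p w = p ^ n1 w * (1 - p) ^ n0 w"

definition proper_prefix :: "bool list \<Rightarrow> bool list \<Rightarrow> bool" where
  "proper_prefix u v \<longleftrightarrow> (\<exists>z. z \<noteq> [] \<and> v = u @ z)"

definition prefix_free :: "bool list set \<Rightarrow> bool" where
  "prefix_free L \<longleftrightarrow> (\<forall>u\<in>L. \<forall>v\<in>L. \<not> proper_prefix u v)"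

(* (L0, L1) is a simulation of f on D; P_p[L] = c is expressed as the
   (absolutely convergent, nonnegative) sum over L having value c *)
definition simulation ::
  "real set \<Rightarrow> (real \<Rightarrow> real) \<Rightarrow> bool list set \<Rightarrow> bool list set \<Rightarrow> bool" where
  "simulation D f L0 L1 \<longleftrightarrow>
     L0 \<inter> L1 = {} \<and> prefix_free (L0 \<union> L1) \<and>
     (\<forall>p\<in>D. (Pw p has_sum 1) (L0 \<union> L1) \<and> (Pw p has_sum f p) L1)"

definition delta_star :: "('s \<Rightarrow> bool \<Rightarrow> 's) \<Rightarrow> 's \<Rightarrow> bool list \<Rightarrow> 's" where
  "delta_star \<delta> s w = foldl \<delta> s w"

definition finite_automaton ::
  "'s set \<Rightarrow> 's \<Rightarrow> ('s \<Rightarrow> bool \<Rightarrow> 's) \<Rightarrow> 's set \<Rightarrow> 's set \<Rightarrow> bool" where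
  "finite_automaton S s0 \<delta> S0 S1 \<longleftrightarrow>
     finite S \<and> s0 \<in> S \<and> (\<forall>s\<in>S. \<forall>b. \<delta> s b \<in> S) \<and>
     S0 \<subseteq> S \<and> S1 \<subseteq> S \<and> S0 \<inter> S1 = {} \<and>
     (\<forall>s\<in>S0. \<forall>b. \<delta> s b \<in> S0) \<and> (\<forall>s\<in>S1. \<forall>b. \<delta> s b \<in> S1)"

definition aut_lang ::
  "'s \<Rightarrow> ('s \<Rightarrow> bool \<Rightarrow> 's) \<Rightarrow> 's set \<Rightarrow> 's set \<Rightarrow> 's set \<Rightarrow> bool list set" where
  "aut_lang s0 \<delta> S0 S1 Si =
     {w. delta_star \<delta> s0 w \<in> Si \<and>
         (\<forall>w'. proper_prefix w' w \<longrightarrow> delta_star \<delta> s0 w' \<notin> S0 \<union> S1)}"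

definition automaton_simulates ::
  "'s set \<Rightarrow> 's \<Rightarrow> ('s \<Rightarrow> bool \<Rightarrow> 's) \<Rightarrow> 's set \<Rightarrow> 's set \<Rightarrow>
   real set \<Rightarrow> (real \<Rightarrow> real) \<Rightarrow> bool" where
  "automaton_simulates S s0 \<delta> S0 S1 D f \<longleftrightarrow>
     finite_automaton S s0 \<delta> S0 S1 \<and>
     simulation D f (aut_lang s0 \<delta> S0 S1 S0) (aut_lang s0 \<delta> S0 S1 S1)"

end

theory Submission
  imports Defs "Jordan_Normal_Form.Char_Poly"
begin

unbundle no vec_syntax

(* Call a non-final state transient if it is reachable from the start state without passing
   through a final state and a final state can still be reached from it. For fixed p, the
   probability u(s) of being absorbed in S1 is harmonic on the transient states,
   u(s) = p u(\<delta>(s,1)) + (1-p) u(\<delta>(s,0)), with boundary values 1 on S1 and 0 elsewhere.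
   This is a linear system (I - Q(p)) u = b(p) whose entries are integer polynomials in p of
   degree at most 1. Every transient state can leave the transient states, so for 0 < p < 1 a
   harmonic function attains its minimum on the boundary, and strictly inside only if it is
   constant along every run to the boundary. Hence the homogeneous system has only the trivial
   solution, det (I - Q(p)) is nonzero, and by Cramer's rule u(s0) = g(p)/h(p) with
   h = det (I - Q) and g the same determinant with one column replaced by b, both of degree at
   most the number of transient states. As both S0 and S1 are reachable from s0, the same
   principle puts the solution strictly between 0 and 1 for every p in (0,1). *)

lemma proper_prefix_Nil [simp]: "\<not> proper_prefix u []"
  by (auto simp: proper_prefix_def)

lemma proper_prefix_Cons:
  "proper_prefix v (b # w) \<longleftrightarrow> v = [] \<or> (\<exists>v'. v = b # v' \<and> proper_prefix v' w)"
  unfolding proper_prefix_def by (cases v) auto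

lemma delta_star_Nil [simp]: "delta_star \<delta> s [] = s"
  by (simp add: delta_star_def)

lemma delta_star_Cons [simp]: "delta_star \<delta> s (b # w) = delta_star \<delta> (\<delta> s b) w"
  by (simp add: delta_star_def)

lemma Pw_Nil [simp]: "Pw p [] = 1"
  by (simp add: Pw_def n1_def n0_def)

lemma Pw_Cons: "Pw p (b # w) = (if b then p else 1 - p) * Pw p w"
  by (simp add: Pw_def n1_def n0_def)

lemma simulation_langs_nonempty:
  assumes "simulation D f L0 L1" "p \<in> D" "0 < f p" "f p < 1"
  shows "L0 \<noteq> {}" "L1 \<noteq> {}"
proof -
  have L1: "(Pw p has_sum f p) L1" and L01: "(Pw p has_sum 1) (L0 \<union> L1)"
    using assms(1,2) unfolding simulation_def by auto
  show "L1 \<noteq> {}"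
  proof
    assume "L1 = {}"
    with L1 have "(Pw p has_sum f p) {}"
      by simp
    then have "f p = 0"
      using has_sum_unique[OF _ has_sum_empty] by blast
    with assms(3) show False
      by simp
  qed
  show "L0 \<noteq> {}"
  proof
    assume "L0 = {}"
    with L01 have "(Pw p has_sum 1) L1"
      by simp
    then have "f p = 1"
      using has_sum_unique[OF L1] by blast
    with assms(4) show False
      by simp
  qed
qed

fun avoids_before_end :: "('s \<Rightarrow> bool \<Rightarrow> 's) \<Rightarrow> 's set \<Rightarrow> 's \<Rightarrow> bool list \<Rightarrow> bool" where
  "avoids_before_end \<delta> F s [] = True"
| "avoids_before_end \<delta> F s (b # w) \<longleftrightarrow> s \<notin> F \<and> avoids_before_end \<delta> F (\<delta> s b) w"

lemma avoids_before_end_iff: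
  "avoids_before_end \<delta> F s w \<longleftrightarrow> (\<forall>w'. proper_prefix w' w \<longrightarrow> delta_star \<delta> s w' \<notin> F)"
proof (induction w arbitrary: s)
  case (Cons b w)
  show ?case using Cons.IH[of "\<delta> s b"] by (auto simp: proper_prefix_Cons)
qed simp

lemma aut_lang_eq:
  "aut_lang s \<delta> S0 S1 Si = {w. delta_star \<delta> s w \<in> Si \<and> avoids_before_end \<delta> (S0 \<union> S1) s w}"
  unfolding aut_lang_def avoids_before_end_iff ..

locale absorbing_automaton =
  fixes s0 :: 's and \<delta> :: "'s \<Rightarrow> bool \<Rightarrow> 's" and S0 S1 :: "'s set"
  assumes final_disjoint: "S0 \<inter> S1 = {}"
begin

abbreviation final :: "'s set" where "final \<equiv> S0 \<union> S1"

abbreviation accepted :: "'s \<Rightarrow> bool list set" where "accepted s \<equiv> aut_lang s \<delta> S0 S1 S1"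

abbreviation rejected :: "'s \<Rightarrow> bool list set" where "rejected s \<equiv> aut_lang s \<delta> S0 S1 S0"

inductive_set reachable :: "'s set" where
  start: "s0 \<in> reachable"
| step: "t \<in> reachable \<Longrightarrow> t \<notin> final \<Longrightarrow> \<delta> t b \<in> reachable"

definition transient :: "'s set" where
  "transient = {t \<in> reachable. t \<notin> final \<and>
     (\<exists>z. delta_star \<delta> t z \<in> final \<and> avoids_before_end \<delta> final t z)}"

definition harmonic :: "real \<Rightarrow> ('s \<Rightarrow> real) \<Rightarrow> bool" where
  "harmonic p y \<longleftrightarrow> (\<forall>s\<in>transient. y s = p * y (\<delta> s True) + (1 - p) * y (\<delta> s False))"

lemma transient_subset:
  assumes "s0 \<in> S" "\<forall>s\<in>S. \<forall>b. \<delta> s b \<in> S"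
  shows "transient \<subseteq> S"
proof
  fix t assume "t \<in> transient"
  then have "t \<in> reachable"
    unfolding transient_def by blast
  then show "t \<in> S"
    by induction (use assms in auto)
qed

lemma run_to_final_stays_transient:
  assumes "t \<in> reachable" "avoids_before_end \<delta> final t z" "delta_star \<delta> t z \<in> final"
  shows "avoids_before_end \<delta> (- transient) t z"
  using assms
proof (induction z arbitrary: t)
  case (Cons b z)
  then have "t \<notin> final" "avoids_before_end \<delta> final (\<delta> t b) z" "delta_star \<delta> (\<delta> t b) z \<in> final"
    by simp_all
  moreover have "t \<in> transient"
    unfolding transient_def using Cons.prems \<open>t \<notin> final\<close> by blast
  ultimately show ?case
    using Cons.IH reachable.step[OF Cons.prems(1)] by simp
qed simp

lemma transient_escape:
  assumes "s \<in> transient"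
  obtains z where "avoids_before_end \<delta> (- transient) s z" "delta_star \<delta> s z \<notin> transient"
proof -
  obtain z where z: "delta_star \<delta> s z \<in> final" "avoids_before_end \<delta> final s z"
    using assms unfolding transient_def by auto
  then show ?thesis
    using that run_to_final_stays_transient assms unfolding transient_def by blast
qed

lemma start_transient:
  assumes "accepted s0 \<noteq> {}" "rejected s0 \<noteq> {}"
  shows "s0 \<in> transient"
proof -
  obtain w1 where w1: "delta_star \<delta> s0 w1 \<in> S1" "avoids_before_end \<delta> final s0 w1"
    using assms(1) by (auto simp: aut_lang_eq)
  obtain w0 where w0: "delta_star \<delta> s0 w0 \<in> S0" "avoids_before_end \<delta> final s0 w0"
    using assms(2) by (auto simp: aut_lang_eq)
  have "s0 \<notin> final"
    using w1 w0 final_disjoint by (cases w1; cases w0) auto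
  then show ?thesis
    using w1 reachable.start unfolding transient_def by blast
qed

lemma transient_not_final: "t \<in> transient \<Longrightarrow> t \<notin> final"
  unfolding transient_def by blast

lemma harmonic_affine:
  assumes "harmonic p y"
  shows "harmonic p (\<lambda>s. a * y s + c)"
  unfolding harmonic_def
proof
  fix s assume "s \<in> transient"
  then have eq: "y s = p * y (\<delta> s True) + (1 - p) * y (\<delta> s False)"
    using assms unfolding harmonic_def by blast
  show "a * y s + c = p * (a * y (\<delta> s True) + c) + (1 - p) * (a * y (\<delta> s False) + c)"
    by (simp only: eq) (simp add: algebra_simps)
qed

lemma weighted_mean_eq_lower_bound:
  fixes p a b c :: real
  assumes "0 < p" "p < 1" "c \<le> a" "c \<le> b" "p * a + (1 - p) * b = c"
  shows "a = c \<and> b = c"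
proof -
  have "p * (a - c) + (1 - p) * (b - c) = 0"
    using assms(5) by (simp add: algebra_simps)
  moreover have "0 \<le> p * (a - c)" "0 \<le> (1 - p) * (b - c)"
    using assms(1-4) by simp_all
  ultimately have "p * (a - c) = 0" "(1 - p) * (b - c) = 0"
    by linarith+
  then show ?thesis
    using assms(1,2) by simp
qed

lemma harmonic_min_along_run:
  assumes "harmonic p y" "0 < p" "p < 1" "\<And>t. c \<le> y t"
  shows "y s = c \<Longrightarrow> avoids_before_end \<delta> (- transient) s w \<Longrightarrow> y (delta_star \<delta> s w) = c"
proof (induction w arbitrary: s)
  case (Cons b w)
  then have "y s = p * y (\<delta> s True) + (1 - p) * y (\<delta> s False)"
    using assms(1) unfolding harmonic_def by auto
  then have "p * y (\<delta> s True) + (1 - p) * y (\<delta> s False) = c"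
    using Cons.prems(1) by simp
  then have "y (\<delta> s True) = c \<and> y (\<delta> s False) = c"
    by (rule weighted_mean_eq_lower_bound[OF assms(2,3) assms(4) assms(4)])
  then have "y (\<delta> s b) = c"
    by (cases b) auto
  with Cons show ?case
    by simp
qed simp

lemma harmonic_nonneg:
  assumes "finite transient" "harmonic p y" "0 < p" "p < 1"
    and boundary: "\<And>t. t \<notin> transient \<Longrightarrow> 0 \<le> y t"
  shows "0 \<le> y t"
proof (rule ccontr)
  assume neg: "\<not> 0 \<le> y t"
  then have t: "t \<in> transient"
    using boundary by force
  define c where "c = Min (y ` transient)"
  have "c \<in> y ` transient"
    unfolding c_def using assms(1) t by (intro Min_in) auto
  then obtain s where s: "s \<in> transient" "y s = c"
    by auto
  have min_transient: "c \<le> y t'" if "t' \<in> transient" for t'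
    using assms(1) that unfolding c_def by simp
  then have "c < 0"
    using t neg by (meson le_less_trans not_le)
  then have min: "c \<le> y t'" for t'
    using boundary min_transient by (cases "t' \<in> transient") force+
  obtain z where z: "avoids_before_end \<delta> (- transient) s z" "delta_star \<delta> s z \<notin> transient"
    using transient_escape[OF s(1)] .
  have "y (delta_star \<delta> s z) = c"
    using harmonic_min_along_run[OF assms(2-4) min s(2) z(1)] .
  then show False
    using boundary[OF z(2)] \<open>c < 0\<close> by linarith
qed

lemma accepted_non_final:
  assumes "s \<notin> final"
  shows "accepted s = Cons True ` accepted (\<delta> s True) \<union> Cons False ` accepted (\<delta> s False)"
proof (rule Set.set_eqI)
  fix w
  show "w \<in> accepted s \<longleftrightarrow>
    w \<in> Cons True ` accepted (\<delta> s True) \<union> Cons False ` accepted (\<delta> s False)"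
  proof (cases w)
    case (Cons b w')
    then show ?thesis
      using assms by (cases b) (auto simp: aut_lang_eq)
  qed (use assms in \<open>auto simp: aut_lang_eq\<close>)
qed

lemma accepted_exit:
  assumes "s \<in> transient" "\<delta> s b \<notin> transient"
  shows "accepted (\<delta> s b) = (if \<delta> s b \<in> S1 then {[]} else {})"
proof -
  let ?t = "\<delta> s b"
  have "?t \<in> reachable"
    using assms(1) unfolding transient_def by (auto intro: reachable.step)
  have "w = []" if "w \<in> accepted ?t" for w
  proof (rule ccontr)
    assume "w \<noteq> []"
    with that have "?t \<notin> final"
      by (cases w) (auto simp: aut_lang_eq)
    with that \<open>?t \<in> reachable\<close> have "?t \<in> transient"
      unfolding transient_def aut_lang_eq by auto
    with assms(2) show False ..
  qed
  then have "accepted ?t = (if [] \<in> accepted ?t then {[]} else {})"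
    by auto
  also have "[] \<in> accepted ?t \<longleftrightarrow> ?t \<in> S1"
    by (simp add: aut_lang_eq)
  finally show ?thesis .
qed

definition accept_prob :: "real \<Rightarrow> 's \<Rightarrow> real" where
  "accept_prob p s = infsum (Pw p) (accepted s)"

lemma accept_prob_exit:
  "s \<in> transient \<Longrightarrow> \<delta> s b \<notin> transient \<Longrightarrow> accept_prob p (\<delta> s b) = of_bool (\<delta> s b \<in> S1)"
  by (simp add: accept_prob_def accepted_exit)

lemma summable_accepted_successor:
  assumes "Pw p summable_on accepted s" "s \<notin> final" "0 < p" "p < 1"
  shows "Pw p summable_on accepted (\<delta> s b)"
proof -
  have "Cons b ` accepted (\<delta> s b) \<subseteq> accepted s"
    using accepted_non_final[OF assms(2)] by (cases b) auto
  then have "(Pw p \<circ> Cons b) summable_on accepted (\<delta> s b)"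
    using summable_on_subset_banach[OF assms(1)] by (subst summable_on_reindex[symmetric]) auto
  then have "(\<lambda>w. (if b then p else 1 - p) * Pw p w) summable_on accepted (\<delta> s b)"
    by (simp add: o_def Pw_Cons)
  then show ?thesis
    using assms(3,4) by (subst (asm) summable_on_cmult_right') auto
qed

lemma summable_accepted_reachable:
  assumes "Pw p summable_on accepted s0" "0 < p" "p < 1" "t \<in> reachable"
  shows "Pw p summable_on accepted t"
  using assms(4) by induction (use assms(1-3) summable_accepted_successor in auto)

lemma accept_prob_step:
  assumes "Pw p summable_on accepted s" "s \<notin> final"
  shows "accept_prob p s = p * accept_prob p (\<delta> s True) + (1 - p) * accept_prob p (\<delta> s False)"
proof -
  let ?A = "\<lambda>b. Cons b ` accepted (\<delta> s b)"
  have split: "accepted s = ?A True \<union> ?A False"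
    using accepted_non_final[OF assms(2)] .
  have "Pw p summable_on ?A b" for b
    using summable_on_subset_banach[OF assms(1)] split by (cases b) auto
  then have "accept_prob p s = infsum (Pw p) (?A True) + infsum (Pw p) (?A False)"
    unfolding accept_prob_def split by (intro infsum_Un_disjoint) auto
  moreover have "infsum (Pw p) (?A b) = (if b then p else 1 - p) * accept_prob p (\<delta> s b)" for b
  proof -
    have "infsum (Pw p) (?A b) = infsum (Pw p \<circ> Cons b) (accepted (\<delta> s b))"
      by (rule infsum_reindex) auto
    also have "\<dots> = (if b then p else 1 - p) * accept_prob p (\<delta> s b)"
      unfolding accept_prob_def o_def Pw_Cons by (rule infsum_cmult_right')
    finally show ?thesis .
  qed
  ultimately show ?thesis
    by simp
qed

end

locale transient_enumeration = absorbing_automaton s0 \<delta> S0 S1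
  for s0 :: 's and \<delta> S0 S1 +
  fixes e :: "nat \<Rightarrow> 's" and m :: nat
  assumes enumeration: "bij_betw e {0..<m} transient"
begin

abbreviation index :: "'s \<Rightarrow> nat" where "index \<equiv> inv_into {0..<m} e"

lemma finite_transient: "finite transient"
  using enumeration bij_betw_finite by blast

lemma enumeration_transient: "i < m \<Longrightarrow> e i \<in> transient"
  using enumeration bij_betw_apply by fastforce

lemma index_enumeration: "i < m \<Longrightarrow> index (e i) = i"
  using enumeration bij_betw_inv_into_left by fastforce

lemma enumeration_index: "s \<in> transient \<Longrightarrow> e (index s) = s"
  using enumeration bij_betw_inv_into_right by fastforce

lemma index_less: "s \<in> transient \<Longrightarrow> index s < m"
  using enumeration bij_betw_apply[OF bij_betw_inv_into] by fastforce

lemma ball_transient_iff: "(\<forall>s\<in>transient. P s) \<longleftrightarrow> (\<forall>i<m. P (e i))"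
proof
  show "\<forall>s\<in>transient. P s" if all: "\<forall>i<m. P (e i)"
  proof
    fix s assume s: "s \<in> transient"
    show "P s"
      using all index_less[OF s] enumeration_index[OF s] by metis
  qed
qed (use enumeration_transient in blast)

lemma sum_enumeration_delta:
  "(\<Sum>j<m. if t = e j then G (e j) else 0) = (if t \<in> transient then G t else (0::'a::comm_ring_1))"
proof -
  have "(\<Sum>j<m. if t = e j then G (e j) else 0) = (\<Sum>s\<in>transient. if t = s then G s else 0)"
    using sum.reindex_bij_betw[OF enumeration, of "\<lambda>s. if t = s then G s else 0"]
    by (simp add: atLeast0LessThan)
  then show ?thesis
    using finite_transient by simp
qed

text \<open>The system \<open>(I - Q(p)) u = b(p)\<close>: \<open>Q(p)\<close> holds the transition probabilities between
  transient states and \<open>b(p)\<close> the probabilities of entering S1 in one step.\<close>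

definition absorption_matrix :: "'a::comm_ring_1 \<Rightarrow> 'a mat" where
  "absorption_matrix p = mat m m (\<lambda>(i, j). (if i = j then 1 else 0)
     - (if \<delta> (e i) True = e j then p else 0) - (if \<delta> (e i) False = e j then 1 - p else 0))"

definition absorption_rhs :: "'a::comm_ring_1 \<Rightarrow> 'a vec" where
  "absorption_rhs p = vec m (\<lambda>i. (if \<delta> (e i) True \<in> S1 then p else 0)
     + (if \<delta> (e i) False \<in> S1 then 1 - p else 0))"

definition with_boundary :: "real vec \<Rightarrow> real \<Rightarrow> 's \<Rightarrow> real" where
  "with_boundary x c s = (if s \<in> transient then x $ index s else c * of_bool (s \<in> S1))"

lemma absorption_matrix_carrier: "absorption_matrix p \<in> carrier_mat m m"
  by (simp add: absorption_matrix_def)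

lemma absorption_rhs_carrier: "absorption_rhs p \<in> carrier_vec m"
  by (simp add: absorption_rhs_def)

lemma absorption_row:
  assumes "i < m" "x \<in> carrier_vec m"
  shows "(absorption_matrix p *\<^sub>v x) $ i - c * absorption_rhs p $ i =
    x $ i - p * with_boundary x c (\<delta> (e i) True) - (1 - p) * with_boundary x c (\<delta> (e i) False)"
proof -
  have succ: "(\<Sum>j<m. if t = e j then q * x $ j else 0) =
      q * with_boundary x c t - c * q * of_bool (t \<in> S1)" for t q
  proof -
    have "(\<Sum>j<m. if t = e j then q * x $ j else 0) = (\<Sum>j<m. if t = e j then q * x $ index (e j) else 0)"
      by (intro sum.cong) (auto simp: index_enumeration)
    also have "\<dots> = (if t \<in> transient then q * x $ index t else 0)"
      by (rule sum_enumeration_delta)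
    finally show ?thesis
      unfolding with_boundary_def transient_def by auto
  qed
  have "(absorption_matrix p *\<^sub>v x) $ i = (\<Sum>j<m. (if i = j then x $ j else 0)
      - (if \<delta> (e i) True = e j then p * x $ j else 0)
      - (if \<delta> (e i) False = e j then (1 - p) * x $ j else 0))"
    using assms unfolding absorption_matrix_def
    by (auto simp: mult_mat_vec_def scalar_prod_def atLeast0LessThan algebra_simps intro!: sum.cong)
  also have "\<dots> = x $ i - (\<Sum>j<m. if \<delta> (e i) True = e j then p * x $ j else 0)
      - (\<Sum>j<m. if \<delta> (e i) False = e j then (1 - p) * x $ j else 0)"
    using assms by (simp add: sum_subtractf)
  finally have row: "(absorption_matrix p *\<^sub>v x) $ i = x $ i
      - (p * with_boundary x c (\<delta> (e i) True) - c * p * of_bool (\<delta> (e i) True \<in> S1))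
      - ((1 - p) * with_boundary x c (\<delta> (e i) False) - c * (1 - p) * of_bool (\<delta> (e i) False \<in> S1))"
    unfolding succ .
  have rhs: "absorption_rhs p $ i =
      p * of_bool (\<delta> (e i) True \<in> S1) + (1 - p) * of_bool (\<delta> (e i) False \<in> S1)"
    using assms(1) by (simp add: absorption_rhs_def)
  show ?thesis
    unfolding row rhs by (simp add: algebra_simps)
qed

lemma absorption_system_iff_harmonic:
  assumes "x \<in> carrier_vec m"
  shows "absorption_matrix p *\<^sub>v x = c \<cdot>\<^sub>v absorption_rhs p \<longleftrightarrow> harmonic p (with_boundary x c)"
proof -
  have entry: "(absorption_matrix p *\<^sub>v x) $ i = (c \<cdot>\<^sub>v absorption_rhs p) $ i \<longleftrightarrow>
      with_boundary x c (e i) = p * with_boundary x c (\<delta> (e i) True)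
        + (1 - p) * with_boundary x c (\<delta> (e i) False)" if "i < m" for i
  proof -
    have "(c \<cdot>\<^sub>v absorption_rhs p) $ i = c * absorption_rhs p $ i"
      using that absorption_rhs_carrier[of p] by simp
    moreover have "with_boundary x c (e i) = x $ i"
      using that by (simp add: with_boundary_def enumeration_transient index_enumeration)
    ultimately show ?thesis
      using absorption_row[OF that assms, of p c] by (intro iffI; linarith)
  qed
  have dims: "dim_vec (absorption_matrix p *\<^sub>v x) = m" "dim_vec (c \<cdot>\<^sub>v absorption_rhs p) = m"
    by (simp_all add: absorption_matrix_def absorption_rhs_def)
  have "absorption_matrix p *\<^sub>v x = c \<cdot>\<^sub>v absorption_rhs p \<longleftrightarrow>
      (\<forall>i<m. (absorption_matrix p *\<^sub>v x) $ i = (c \<cdot>\<^sub>v absorption_rhs p) $ i)"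
    unfolding vec_eq_iff dims by blast
  also have "\<dots> \<longleftrightarrow> (\<forall>i<m. with_boundary x c (e i) = p * with_boundary x c (\<delta> (e i) True)
      + (1 - p) * with_boundary x c (\<delta> (e i) False))"
    using entry by blast
  also have "\<dots> \<longleftrightarrow> harmonic p (with_boundary x c)"
    unfolding harmonic_def ball_transient_iff ..
  finally show ?thesis .
qed

lemma det_absorption_matrix_nonzero:
  fixes p :: real
  assumes p: "0 < p" "p < 1"
  shows "det (absorption_matrix p) \<noteq> 0"
proof
  assume "det (absorption_matrix p) = 0"
  then obtain v where v: "v \<in> carrier_vec m" "v \<noteq> 0\<^sub>v m" "absorption_matrix p *\<^sub>v v = 0\<^sub>v m"
    using det_0_iff_vec_prod_zero_field[OF absorption_matrix_carrier] by blast
  moreover have "0 \<cdot>\<^sub>v absorption_rhs p = 0\<^sub>v m"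
    by (intro eq_vecI) (auto simp: absorption_rhs_def)
  ultimately have y: "harmonic p (with_boundary v 0)"
    using absorption_system_iff_harmonic[OF v(1), of p 0] by simp
  have "0 \<le> with_boundary v 0 s" "0 \<le> -1 * with_boundary v 0 s + 0" for s
    using harmonic_nonneg[OF finite_transient y p]
      harmonic_nonneg[OF finite_transient harmonic_affine[OF y, where a = "-1" and c = 0] p]
    by (auto simp: with_boundary_def)
  then have zero: "with_boundary v 0 s = 0" for s
    by (smt (verit))
  have "v $ i = 0" if "i < m" for i
    using zero[of "e i"] that by (simp add: with_boundary_def enumeration_transient index_enumeration)
  then have "v = 0\<^sub>v m"
    using v(1) by (intro eq_vecI) auto
  with v(2) show False ..
qed

lemma absorption_system_solvable:
  fixes p :: real
  assumes "0 < p" "p < 1"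
  obtains x where "x \<in> carrier_vec m" "absorption_matrix p *\<^sub>v x = absorption_rhs p"
proof -
  have "absorption_matrix p \<in> Units (ring_mat TYPE(real) m ())"
    by (rule det_non_zero_imp_unit[OF absorption_matrix_carrier det_absorption_matrix_nonzero[OF assms]])
  then obtain B where B: "B \<in> carrier_mat m m" "absorption_matrix p * B = 1\<^sub>m m"
    unfolding Units_def ring_mat_def by auto
  have "absorption_matrix p *\<^sub>v (B *\<^sub>v absorption_rhs p) = (absorption_matrix p * B) *\<^sub>v absorption_rhs p"
    using B(1) absorption_matrix_carrier absorption_rhs_carrier by (metis assoc_mult_mat_vec)
  also have "\<dots> = absorption_rhs p"
    using B(2) absorption_rhs_carrier[of p] by simp
  finally show ?thesis
    using that B(1) absorption_rhs_carrier by (meson mult_mat_vec_carrier)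
qed

lemma absorption_cramer:
  fixes p :: real
  assumes "x \<in> carrier_vec m" "absorption_matrix p *\<^sub>v x = absorption_rhs p" "k < m"
    and "0 < p" "p < 1"
  shows "det (replace_col (absorption_matrix p) (absorption_rhs p) k) / det (absorption_matrix p) = x $ k"
  using cramer_lemma_mat[OF absorption_matrix_carrier assms(1,3), of p] assms(2)
    det_absorption_matrix_nonzero[OF assms(4,5)]
  by simp

lemma absorption_solution_bounds:
  fixes p :: real
  assumes p: "0 < p" "p < 1" and x: "x \<in> carrier_vec m"
    and sol: "absorption_matrix p *\<^sub>v x = absorption_rhs p"
    and nonempty: "accepted s0 \<noteq> {}" "rejected s0 \<noteq> {}"
  shows "0 < x $ index s0 \<and> x $ index s0 < 1"
proof -
  let ?y = "with_boundary x 1"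
  have y: "harmonic p ?y"
    using absorption_system_iff_harmonic[OF x, of p 1] sol by simp
  have ge0: "0 \<le> ?y t" for t
    using harmonic_nonneg[OF finite_transient y p] by (auto simp: with_boundary_def)
  have ge1: "0 \<le> -1 * ?y t + 1" for t
    using harmonic_nonneg[OF finite_transient harmonic_affine[OF y, where a = "-1" and c = 1] p]
    by (auto simp: with_boundary_def)
  have s0: "s0 \<in> transient"
    using start_transient[OF nonempty] .
  obtain w1 where w1: "delta_star \<delta> s0 w1 \<in> S1" "avoids_before_end \<delta> (- transient) s0 w1"
    using nonempty(1) run_to_final_stays_transient[OF reachable.start] by (auto simp: aut_lang_eq)
  obtain w0 where w0: "delta_star \<delta> s0 w0 \<in> S0" "avoids_before_end \<delta> (- transient) s0 w0"
    using nonempty(2) run_to_final_stays_transient[OF reachable.start] by (auto simp: aut_lang_eq)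
  have end1: "?y (delta_star \<delta> s0 w1) = 1" and end0: "?y (delta_star \<delta> s0 w0) = 0"
    using w1(1) w0(1) final_disjoint transient_not_final by (auto simp: with_boundary_def)
  have "0 < ?y s0"
  proof (rule ccontr)
    assume "\<not> 0 < ?y s0"
    then have "?y s0 = 0"
      using ge0[of s0] by linarith
    then have "?y (delta_star \<delta> s0 w1) = 0"
      by (rule harmonic_min_along_run[OF y p ge0 _ w1(2)])
    with end1 show False
      by simp
  qed
  moreover have "?y s0 < 1"
  proof (rule ccontr)
    assume "\<not> ?y s0 < 1"
    then have "-1 * ?y s0 + 1 = 0"
      using ge1[of s0] by linarith
    then have "-1 * ?y (delta_star \<delta> s0 w0) + 1 = 0"
      by (rule harmonic_min_along_run[OF harmonic_affine[OF y, where a = "-1" and c = 1] p ge1 _ w0(2)])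
    with end0 show False
      by simp
  qed
  moreover have "?y s0 = x $ index s0"
    using s0 by (simp add: with_boundary_def)
  ultimately show ?thesis
    by simp
qed

lemma accept_prob_solves_absorption_system:
  fixes p :: real
  assumes "0 < p" "p < 1" "Pw p summable_on accepted s0"
  shows "absorption_matrix p *\<^sub>v vec m (\<lambda>j. accept_prob p (e j)) = absorption_rhs p"
proof -
  let ?u = "vec m (\<lambda>j. accept_prob p (e j))"
  have u: "?u \<in> carrier_vec m"
    by simp
  have self: "with_boundary ?u 1 s = accept_prob p s" if "s \<in> transient" for s
    using that by (simp add: with_boundary_def index_less enumeration_index)
  have succ: "with_boundary ?u 1 (\<delta> s b) = accept_prob p (\<delta> s b)" if "s \<in> transient" for s b
  proof (cases "\<delta> s b \<in> transient")
    case False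
    then show ?thesis
      using accept_prob_exit[OF that False] by (simp add: with_boundary_def)
  qed (rule self)
  have "harmonic p (with_boundary ?u 1)"
    unfolding harmonic_def
  proof
    fix s assume s: "s \<in> transient"
    then have "Pw p summable_on accepted s" "s \<notin> final"
      using summable_accepted_reachable[OF assms(3,1,2)] unfolding transient_def by auto
    then show "with_boundary ?u 1 s = p * with_boundary ?u 1 (\<delta> s True)
        + (1 - p) * with_boundary ?u 1 (\<delta> s False)"
      unfolding self[OF s] succ[OF s] by (rule accept_prob_step)
  qed
  then have "absorption_matrix p *\<^sub>v ?u = 1 \<cdot>\<^sub>v absorption_rhs p"
    using absorption_system_iff_harmonic[OF u] by blast
  then show ?thesis
    by simp
qed

definition absorption_ratio :: "real \<Rightarrow> real" where
  "absorption_ratio p = det (replace_col (absorption_matrix p) (absorption_rhs p) (index s0))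
     / det (absorption_matrix p)"

lemma absorption_ratio_bounds:
  assumes "0 < p" "p < 1" "accepted s0 \<noteq> {}" "rejected s0 \<noteq> {}"
  shows "0 < absorption_ratio p \<and> absorption_ratio p < 1"
proof -
  obtain x where x: "x \<in> carrier_vec m" "absorption_matrix p *\<^sub>v x = absorption_rhs p"
    using absorption_system_solvable[OF assms(1,2)] .
  have "index s0 < m"
    using index_less[OF start_transient[OF assms(3,4)]] .
  then show ?thesis
    using absorption_cramer[OF x _ assms(1,2)] absorption_solution_bounds[OF assms(1,2) x assms(3,4)]
    by (simp add: absorption_ratio_def)
qed

lemma absorption_ratio_eq_accept_prob:
  assumes "0 < p" "p < 1" "Pw p summable_on accepted s0" "s0 \<in> transient"
  shows "absorption_ratio p = accept_prob p s0"
  using absorption_cramer[OF _ accept_prob_solves_absorption_system[OF assms(1-3)]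
      index_less[OF assms(4)] assms(1,2)]
    index_less[OF assms(4)] enumeration_index[OF assms(4)]
  by (simp add: absorption_ratio_def)

lemma map_absorption_matrix:
  assumes "comm_ring_hom h"
  shows "map_mat h (absorption_matrix p) = absorption_matrix (h p)"
proof -
  interpret comm_ring_hom h by fact
  show ?thesis by (intro eq_matI) (auto simp: absorption_matrix_def hom_distribs)
qed

lemma map_absorption_rhs:
  assumes "comm_ring_hom h"
  shows "map_vec h (absorption_rhs p) = absorption_rhs (h p)"
proof -
  interpret comm_ring_hom h by fact
  show ?thesis by (intro eq_vecI) (auto simp: absorption_rhs_def hom_distribs)
qed

text \<open>The determinants are taken over \<open>\<int>[X]\<close>, where all entries have degree at most 1;
  evaluation at \<open>X = x\<close> is a ring homomorphism and hence commutes with \<open>det\<close>.\<close>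

lemma absorption_determinants_poly:
  assumes "k < m"
  obtains g h :: "int poly"
  where "degree g \<le> m" "degree h \<le> m"
    "\<And>x::real. poly (map_poly of_int h) x = det (absorption_matrix x)"
    "\<And>x::real. poly (map_poly of_int g) x =
       det (replace_col (absorption_matrix x) (absorption_rhs x) k)"
proof -
  define X :: "int poly" where "X = [:0, 1:]"
  define A where "A = absorption_matrix X"
  define Ak where "Ak = replace_col A (absorption_rhs X) k"
  have carrier: "A \<in> carrier_mat m m" "Ak \<in> carrier_mat m m"
    by (simp_all add: A_def Ak_def replace_col_def absorption_matrix_def)
  have entries: "degree (A $$ (i, j)) \<le> 1" "degree (Ak $$ (i, j)) \<le> 1"
    if "i < m" "j < m" for i j
    using that by (auto simp: A_def Ak_def X_def absorption_matrix_def absorption_rhs_def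
        replace_col_def intro!: degree_add_le degree_diff_le)
  have eval: "poly (map_poly of_int (det A)) x = det (absorption_matrix x)"
    "poly (map_poly of_int (det Ak)) x = det (replace_col (absorption_matrix x) (absorption_rhs x) k)"
    for x :: real
  proof -
    define ev where "ev q = poly (map_poly of_int q) x" for q :: "int poly"
    interpret comm_ring_hom ev
      unfolding ev_def by unfold_locales (simp_all add: of_int_poly_hom.hom_add of_int_poly_hom.hom_mult)
    have "ev X = x"
      by (simp add: ev_def X_def)
    then have "map_mat ev A = absorption_matrix x" "map_vec ev (absorption_rhs X) = absorption_rhs x"
      unfolding A_def by (simp_all add: map_absorption_matrix map_absorption_rhs comm_ring_hom_axioms)
    moreover have "map_mat ev Ak = replace_col (map_mat ev A) (map_vec ev (absorption_rhs X)) k"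
      using carrier(1) absorption_rhs_carrier[of X]
      by (intro eq_matI) (auto simp: Ak_def replace_col_def)
    ultimately show "poly (map_poly of_int (det A)) x = det (absorption_matrix x)"
      "poly (map_poly of_int (det Ak)) x = det (replace_col (absorption_matrix x) (absorption_rhs x) k)"
      unfolding ev_def[symmetric] hom_det[symmetric] by simp_all
  qed
  show ?thesis
    using that[OF _ _ eval] degree_det_le[OF entries(1) carrier(1)] degree_det_le[OF entries(2) carrier(2)]
    by simp
qed


lemma simulated_function_rational:
  assumes D: "D \<subseteq> {0<..<1}" "D \<noteq> {}" "\<forall>p\<in>D. 0 < f p \<and> f p < 1"
    and sim: "simulation D f (rejected s0) (accepted s0)"
  shows "\<exists>g h :: int poly. degree g \<le> m \<and> degree h \<le> m \<and>
     (\<forall>x\<in>{0<..<1::real}. poly (map_poly of_int h) x \<noteq> 0) \<and>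
     (\<forall>x\<in>{0<..<1::real}. 0 < poly (map_poly of_int g) x / poly (map_poly of_int h) x \<and>
                         poly (map_poly of_int g) x / poly (map_poly of_int h) x < 1) \<and>
     (\<forall>p\<in>D. poly (map_poly of_int g) p / poly (map_poly of_int h) p = f p)"
proof -
  obtain p0 where "p0 \<in> D"
    using D(2) by auto
  then have nonempty: "rejected s0 \<noteq> {}" "accepted s0 \<noteq> {}"
    using simulation_langs_nonempty[OF sim] D(3) by auto
  have s0: "s0 \<in> transient"
    using start_transient nonempty by blast
  obtain g h where "degree g \<le> m" "degree h \<le> m"
    and h: "\<And>x::real. poly (map_poly of_int h) x = det (absorption_matrix x)"
    and g: "\<And>x::real. poly (map_poly of_int g) x =
      det (replace_col (absorption_matrix x) (absorption_rhs x) (index s0))"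
    using absorption_determinants_poly[OF index_less[OF s0]] by blast
  then have ratio: "poly (map_poly of_int g) x / poly (map_poly of_int h) x = absorption_ratio x" for x
    by (simp add: absorption_ratio_def)
  have "\<forall>x\<in>{0<..<1::real}. poly (map_poly of_int h) x \<noteq> 0"
    using det_absorption_matrix_nonzero by (simp add: h)
  moreover have "\<forall>x\<in>{0<..<1::real}. 0 < absorption_ratio x \<and> absorption_ratio x < 1"
    using absorption_ratio_bounds nonempty by simp
  moreover have "\<forall>p\<in>D. absorption_ratio p = f p"
  proof
    fix p assume "p \<in> D"
    then have p: "0 < p" "p < 1" and sum: "(Pw p has_sum f p) (accepted s0)"
      using D(1) sim unfolding simulation_def by auto
    show "absorption_ratio p = f p"
      unfolding absorption_ratio_eq_accept_prob[OF p has_sum_imp_summable[OF sum] s0] accept_prob_def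
      by (rule infsumI[OF sum])
  qed
  ultimately show ?thesis
    using \<open>degree g \<le> m\<close> \<open>degree h \<le> m\<close> unfolding ratio[symmetric] by blast
qed
end

lemma degree_bounds_mono:
  "\<exists>g h. degree g \<le> m \<and> degree h \<le> m \<and> P g h \<Longrightarrow> m \<le> n \<Longrightarrow>
   \<exists>g h. degree g \<le> n \<and> degree h \<le> n \<and> P g h"
  by (meson le_trans)

theorem proposition2p3:
  fixes D :: "real set" and f :: "real \<Rightarrow> real" and n :: nat
    and S :: "'s set" and s0 :: 's and \<delta> :: "'s \<Rightarrow> bool \<Rightarrow> 's" and S0 S1 :: "'s set"
  assumes "D \<subseteq> {0<..<1}" and "D \<noteq> {}"
    and "\<forall>p\<in>D. 0 < f p \<and> f p < 1"
    and "automaton_simulates S s0 \<delta> S0 S1 D f"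
    and "card S = n"
  shows "\<exists>g h :: int poly. degree g \<le> n \<and> degree h \<le> n \<and>
     (\<forall>x\<in>{0<..<1::real}. poly (map_poly of_int h) x \<noteq> 0) \<and>
     (\<forall>x\<in>{0<..<1::real}. 0 < poly (map_poly of_int g) x / poly (map_poly of_int h) x \<and>
                         poly (map_poly of_int g) x / poly (map_poly of_int h) x < 1) \<and>
     (\<forall>p\<in>D. poly (map_poly of_int g) p / poly (map_poly of_int h) p = f p)"
proof -
  have aut: "finite_automaton S s0 \<delta> S0 S1"
    and sim: "simulation D f (aut_lang s0 \<delta> S0 S1 S0) (aut_lang s0 \<delta> S0 S1 S1)"
    using assms(4) unfolding automaton_simulates_def by auto
  interpret absorbing_automaton s0 \<delta> S0 S1
    using aut by unfold_locales (simp add: finite_automaton_def)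
  have S: "finite S" "s0 \<in> S" "\<forall>s\<in>S. \<forall>b. \<delta> s b \<in> S"
    using aut unfolding finite_automaton_def by auto
  then have "transient \<subseteq> S"
    using transient_subset by blast
  then have "finite transient" "card transient \<le> n"
    using finite_subset[OF _ S(1)] card_mono[OF S(1)] assms(5) by auto
  then obtain e where "bij_betw e {0..<card transient} transient"
    using ex_bij_betw_nat_finite by blast
  then interpret transient_enumeration s0 \<delta> S0 S1 e "card transient"
    by unfold_locales
  show ?thesis
    using simulated_function_rational[OF assms(1-3) sim] \<open>card transient \<le> n\<close>
    by (rule degree_bounds_mono)
qed

end
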